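(* Let $M$ be a magma satisfying $xy = xz$ and $(xy)z = x$ for all $x,y,z\in M$. Then $M$ satisfies $xy = x$ for all $x,y\in M$ if and only if $M$ avoids the magma $N$ on $\{0,1\}$ with Cayley table \[ \begin{array}{c|cc} N & 0 & 1 \\ \hline 0 & 1 & 1 \\ 1 & 0 & 0 \end{array}. \]
   Context: A magma is a nonempty set with a binary operation, written by juxtaposition. A magma $M$ avoids a magma $F$ if no submagma of $M$ is isomorphic to $F$. *)

theory Defs
  imports Main
begin

definition magma :: "'a set \<Rightarrow> ('a \<Rightarrow> 'a \<Rightarrow> 'a) \<Rightarrow> bool" where
  "magma M f \<longleftrightarrow> M \<noteq> {} \<and> (\<forall>x\<in>M. \<forall>y\<in>M. f x y \<in> M)"

definition magma_iso :: "'a set \<Rightarrow> ('a \<Rightarrow> 'a \<Rightarrow> 'a) \<Rightarrow> 'b set \<Rightarrow> ('b \<Rightarrow> 'b \<Rightarrow> 'b) \<Rightarrow> bool" where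
  "magma_iso A f B g \<longleftrightarrow>
     (\<exists>h. bij_betw h A B \<and> (\<forall>x\<in>A. \<forall>y\<in>A. h (f x y) = g (h x) (h y)))"

definition submagma :: "'a set \<Rightarrow> 'a set \<Rightarrow> ('a \<Rightarrow> 'a \<Rightarrow> 'a) \<Rightarrow> bool" where
  "submagma S M f \<longleftrightarrow> S \<subseteq> M \<and> magma S f"

definition avoids :: "'a set \<Rightarrow> ('a \<Rightarrow> 'a \<Rightarrow> 'a) \<Rightarrow> 'b set \<Rightarrow> ('b \<Rightarrow> 'b \<Rightarrow> 'b) \<Rightarrow> bool" where
  "avoids M f F g \<longleftrightarrow> \<not> (\<exists>S. submagma S M f \<and> magma_iso F g S f)"

definition N_carrier :: "nat set" where "N_carrier = {0, 1}"
definition N_op :: "nat \<Rightarrow> nat \<Rightarrow> nat" where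
  "N_op x y = (if x = 0 then 1 else 0)"

end

theory Submission
  imports Defs
begin

text \<open>Left-zero magmas (\<open>xy = x\<close>) are closed under isomorphism and taking submagmas, and N is
  not left-zero, so a left-zero magma avoids N. Conversely, if \<open>c = ab \<noteq> a\<close>, the two laws give
  \<open>ax = c\<close> and \<open>cx = a\<close> for all \<open>x\<close>, so \<open>{a, c}\<close> is a copy of N via \<open>0 \<mapsto> a, 1 \<mapsto> c\<close>.\<close>

lemma magma_iso_left_zero:
  assumes "magma A f" and "magma_iso A f B g" and "\<forall>x\<in>B. \<forall>y\<in>B. g x y = x"
  shows "\<forall>x\<in>A. \<forall>y\<in>A. f x y = x"
proof (intro ballI)
  fix x y assume x: "x \<in> A" and y: "y \<in> A"
  obtain h where bij: "bij_betw h A B" and hom: "\<forall>x\<in>A. \<forall>y\<in>A. h (f x y) = g (h x) (h y)"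
    using assms(2) unfolding magma_iso_def by blast
  have "f x y \<in> A" using assms(1) x y unfolding magma_def by blast
  moreover have "h (f x y) = h x"
    using hom assms(3) bij x y by (simp add: bij_betw_apply)
  ultimately show "f x y = x"
    using bij x unfolding bij_betw_def inj_on_def by blast
qed

lemma magma_N: "magma N_carrier N_op"
  by (simp add: magma_def N_carrier_def N_op_def)

lemma N_op_not_left_zero: "\<not> (\<forall>x\<in>N_carrier. \<forall>y\<in>N_carrier. N_op x y = x)"
  by (auto simp: N_carrier_def N_op_def)

lemma left_zero_avoids_N:
  assumes "\<forall>x\<in>M. \<forall>y\<in>M. f x y = x"
  shows "avoids M f N_carrier N_op"
  unfolding avoids_def
proof
  assume "\<exists>S. submagma S M f \<and> magma_iso N_carrier N_op S f"
  then obtain S where "S \<subseteq> M" and "magma_iso N_carrier N_op S f"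
    unfolding submagma_def by blast
  moreover have "\<forall>x\<in>S. \<forall>y\<in>S. f x y = x" if "S \<subseteq> M"
    using assms that by blast
  ultimately show False
    using magma_iso_left_zero[OF magma_N] N_op_not_left_zero by blast
qed

lemma magma_iso_N_pairI:
  assumes "a \<noteq> c" and "f a a = c" "f a c = c" "f c a = a" "f c c = a"
  shows "magma_iso N_carrier N_op {a, c} f"
  unfolding magma_iso_def
proof (intro exI conjI)
  let ?h = "\<lambda>n::nat. if n = 0 then a else c"
  show "bij_betw ?h N_carrier {a, c}"
    using assms(1) by (auto simp: bij_betw_def inj_on_def N_carrier_def)
  show "\<forall>x\<in>N_carrier. \<forall>y\<in>N_carrier. ?h (N_op x y) = f (?h x) (?h y)"
    using assms by (auto simp: N_carrier_def N_op_def)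
qed

lemma not_left_zero_contains_N:
  assumes "magma M f"
    and right_const: "\<forall>x\<in>M. \<forall>y\<in>M. \<forall>z\<in>M. f x y = f x z"
    and cancel: "\<forall>x\<in>M. \<forall>y\<in>M. \<forall>z\<in>M. f (f x y) z = x"
    and "a \<in> M" "b \<in> M" "f a b \<noteq> a"
  shows "\<not> avoids M f N_carrier N_op"
proof -
  define c where "c = f a b"
  have "c \<in> M" using assms(1,4,5) unfolding magma_def c_def by blast
  have a_mult: "f a z = c" if "z \<in> M" for z
    using right_const assms(4,5) that unfolding c_def by metis
  have c_mult: "f c z = a" if "z \<in> M" for z
    using cancel assms(4,5) that unfolding c_def by blast
  have "submagma {a, c} M f"
    unfolding submagma_def magma_def using assms(4) \<open>c \<in> M\<close> a_mult c_mult by auto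
  moreover have "magma_iso N_carrier N_op {a, c} f"
    using assms(4,6) \<open>c \<in> M\<close> a_mult c_mult by (intro magma_iso_N_pairI) (auto simp: c_def)
  ultimately show ?thesis unfolding avoids_def by blast
qed

theorem mainTheorem5:
  fixes M :: "'a set" and f :: "'a \<Rightarrow> 'a \<Rightarrow> 'a"
  assumes "magma M f"
    and "\<forall>x\<in>M. \<forall>y\<in>M. \<forall>z\<in>M. f x y = f x z"
    and "\<forall>x\<in>M. \<forall>y\<in>M. \<forall>z\<in>M. f (f x y) z = x"
  shows "(\<forall>x\<in>M. \<forall>y\<in>M. f x y = x) \<longleftrightarrow> avoids M f N_carrier N_op"
  using left_zero_avoids_N not_left_zero_contains_N[OF assms] by blast

end
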